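(* Let $\mathcal{M}$ be a $W^*$-algebra, $p_0\in\mathcal{L}(\mathcal{M})$, $P_0:=\mathcal{G}_{p_0}(\mathcal{M})\cap\mathcal{M}p_0$ (an open subset of $\mathcal{M}p_0$) and $P_0^u:=\{\eta\in P_0:\eta^*\eta=p_0\}$. Let $X_1,X_2:P_0\to\mathcal{M}$ be smooth maps representing sections of the algebroid $\mathcal{A}_{p_0}(\mathcal{M})$ (i.e. $X_i(\eta g)=X_i(\eta)$ for all invertible $g\in p_0\mathcal{M}p_0$), and define $$[X_1,X_2]_{\mathcal{A}}:=[X_2,X_1]+\Big\langle\frac{\partial X_2}{\partial\eta},X_1\eta\Big\rangle-\Big\langle\frac{\partial X_1}{\partial\eta},X_2\eta\Big\rangle+\Big\langle\frac{\partial X_2}{\partial\eta^*},\eta^*X_1^*\Big\rangle-\Big\langle\frac{\partial X_1}{\partial\eta^*},\eta^*X_2^*\Big\rangle,$$ where $[X_2,X_1]=X_2X_1-X_1X_2$. If $\eta^*\big(X_i(\eta)+X_i(\eta)^*\big)\eta=0$ for all $\eta\in P_0^u$ and $i=1,2$ (i.e. $X_1,X_2$ are sections of the subbundle corresponding to partial isometries), then $X:=[X_1,X_2]_{\mathcal{A}}$ also satisfies $\eta^*\big(X(\eta)+X(\eta)^*\big)\eta=0$ for all $\eta\in P_0^u$.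
   Context: $\mathcal{L}(\mathcal{M})$ is the lattice of orthogonal projections; $\mathcal{G}(\mathcal{M})$ is the groupoid of partially invertible elements ($x\in\mathcal{M}$ with $|x|$ invertible in $p\mathcal{M}p$, $p$ the support of $|x|$), with target the left support $\mathbf{l}$ and source the right support $\mathbf{r}$; $\mathcal{L}_{p_0}(\mathcal{M})=\{\mathbf{l}(x):\mathbf{r}(x)=p_0\}$ and $\mathcal{G}_{p_0}(\mathcal{M})=\mathbf{l}^{-1}(\mathcal{L}_{p_0}(\mathcal{M}))\cap\mathbf{r}^{-1}(\mathcal{L}_{p_0}(\mathcal{M}))$. The algebroid $\mathcal{A}_{p_0}(\mathcal{M})\cong TP_0/G_0$ of $\mathcal{G}_{p_0}(\mathcal{M})\rightrightarrows\mathcal{L}_{p_0}(\mathcal{M})$ ($G_0$ the invertible elements of $p_0\mathcal{M}p_0$): a $G_0$-invariant vector field on $P_0$ with component $\vartheta:P_0\to\mathcal{M}p_0$, $\vartheta(\eta g)=\vartheta(\eta)g$, corresponds to the section $X(\mathbf{l}(\eta))=\vartheta(\eta)\eta^{-1}$. Functions are written in the complex coordinates $(\eta,\eta^* )\in\mathcal{M}p_0\oplus p_0\mathcal{M}$; $\partial/\partial\eta$ and $\partial/\partial\eta^*$ denote the partial (Fréchet) derivatives with respect to $\eta$ and $\eta^*$ treated as independent variables, and $\langle\partial F/\partial\eta,v\rangle$ denotes the derivative of $F$ in direction $v$. For a section with $\vartheta(\eta)=X(\eta)\eta$ on $P_0^u$, the condition $\eta^*\vartheta+\vartheta^*\eta=0$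 (tangency to $P_0^u$) is equivalent to $\eta^*(X+X^* )\eta=0$. *)

theory Defs
  imports "HOL-Analysis.Analysis"
begin

text \<open>An abstract unital complex C*-algebra is modelled on a type
  'a :: {real_normed_algebra_1, banach} together with a complex scalar
  multiplication sc and an involution st satisfying the C*-axioms.\<close>

definition cstar_alg :: "(complex \<Rightarrow> 'a::{real_normed_algebra_1,banach} \<Rightarrow> 'a) \<Rightarrow> ('a \<Rightarrow> 'a) \<Rightarrow> bool"
  where "cstar_alg sc st \<longleftrightarrow>
    (\<forall>x. sc 1 x = x) \<and>
    (\<forall>a b x. sc a (sc b x) = sc (a * b) x) \<and>
    (\<forall>a x y. sc a (x + y) = sc a x + sc a y) \<and>
    (\<forall>a b x. sc (a + b) x = sc a x + sc b x) \<and>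
    (\<forall>r x. sc (complex_of_real r) x = r *\<^sub>R x) \<and>
    (\<forall>a x y. sc a (x * y) = sc a x * y \<and> sc a (x * y) = x * sc a y) \<and>
    (\<forall>a x. norm (sc a x) = cmod a * norm x) \<and>
    (\<forall>x. st (st x) = x) \<and>
    (\<forall>x y. st (x + y) = st x + st y) \<and>
    (\<forall>a x. st (sc a x) = sc (cnj a) (st x)) \<and>
    (\<forall>x y. st (x * y) = st y * st x) \<and>
    (\<forall>x. norm (st x * x) = (norm x)\<^sup>2)"

definition clin_fun :: "(complex \<Rightarrow> 'a::real_normed_vector \<Rightarrow> 'a) \<Rightarrow> ('a \<Rightarrow> complex) \<Rightarrow> bool"
  where "clin_fun sc f \<longleftrightarrow> (\<forall>x y. f (x + y) = f x + f y) \<and> (\<forall>a x. f (sc a x) = a * f x)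
           \<and> (\<exists>K. \<forall>x. cmod (f x) \<le> K * norm x)"

definition fnorm :: "('a::real_normed_vector \<Rightarrow> complex) \<Rightarrow> real"
  where "fnorm f = Sup {cmod (f x) | x. norm x \<le> 1}"

text \<open>The predual is represented as a norm-closed complex subspace N of
  the dual of M such that the canonical map x \<mapsto> (f \<mapsto> f x) is an isometric
  isomorphism of M onto the dual of N.\<close>

definition wstar_alg :: "(complex \<Rightarrow> 'a::{real_normed_algebra_1,banach} \<Rightarrow> 'a) \<Rightarrow> ('a \<Rightarrow> 'a) \<Rightarrow> bool"
  where "wstar_alg sc st \<longleftrightarrow> cstar_alg sc st \<and>
    (\<exists>N :: ('a \<Rightarrow> complex) set.
       N \<subseteq> {f. clin_fun sc f} \<and>
       (\<lambda>_. 0) \<in> N \<and>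
       (\<forall>f\<in>N. \<forall>g\<in>N. (\<lambda>x. f x + g x) \<in> N) \<and>
       (\<forall>f\<in>N. \<forall>a. (\<lambda>x. a * f x) \<in> N) \<and>
       (\<forall>g. clin_fun sc g \<and> (\<forall>e>0. \<exists>f\<in>N. fnorm (\<lambda>x. f x - g x) < e) \<longrightarrow> g \<in> N) \<and>
       (\<forall>\<psi> :: ('a \<Rightarrow> complex) \<Rightarrow> complex.
          (\<forall>f\<in>N. \<forall>g\<in>N. \<psi> (\<lambda>x. f x + g x) = \<psi> f + \<psi> g) \<and>
          (\<forall>f\<in>N. \<forall>a. \<psi> (\<lambda>x. a * f x) = a * \<psi> f) \<and>
          (\<exists>K. \<forall>f\<in>N. cmod (\<psi> f) \<le> K * fnorm f)
          \<longrightarrow> (\<exists>!x. \<forall>f\<in>N. \<psi> f = f x)) \<and>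
       (\<forall>x. norm x = Sup {cmod (f x) | f. f \<in> N \<and> fnorm f \<le> 1}))"

definition proj :: "('a::times \<Rightarrow> 'a) \<Rightarrow> 'a \<Rightarrow> bool"
  where "proj st p \<longleftrightarrow> st p = p \<and> p * p = p"

definition positive :: "('a::times \<Rightarrow> 'a) \<Rightarrow> 'a \<Rightarrow> bool"
  where "positive st a \<longleftrightarrow> (\<exists>b. a = st b * b)"

definition absv :: "('a::times \<Rightarrow> 'a) \<Rightarrow> 'a \<Rightarrow> 'a"
  where "absv st x = (THE a. positive st a \<and> a * a = st x * x)"

text \<open>Right support: smallest projection p with x p = x; left support: smallest
  projection p with p x = x (order of projections: p \<le> q iff p q = p).\<close>

definition rsupp :: "('a::times \<Rightarrow> 'a) \<Rightarrow> 'a \<Rightarrow> 'a"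
  where "rsupp st x = (THE p. proj st p \<and> x * p = x \<and> (\<forall>q. proj st q \<and> x * q = x \<longrightarrow> p * q = p))"

definition lsupp :: "('a::times \<Rightarrow> 'a) \<Rightarrow> 'a \<Rightarrow> 'a"
  where "lsupp st x = (THE p. proj st p \<and> p * x = x \<and> (\<forall>q. proj st q \<and> q * x = x \<longrightarrow> p * q = p))"

definition partinv :: "('a::times \<Rightarrow> 'a) \<Rightarrow> 'a \<Rightarrow> bool"
  where "partinv st x \<longleftrightarrow>
    (let a = absv st x; p = rsupp st a in \<exists>y. p * y * p = y \<and> a * y = p \<and> y * a = p)"

definition Gpi :: "('a::times \<Rightarrow> 'a) \<Rightarrow> 'a set"
  where "Gpi st = {x. partinv st x}"

definition Lp0 :: "('a::times \<Rightarrow> 'a) \<Rightarrow> 'a \<Rightarrow> 'a set"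
  where "Lp0 st p0 = {lsupp st x | x. x \<in> Gpi st \<and> rsupp st x = p0}"

definition Gp0 :: "('a::times \<Rightarrow> 'a) \<Rightarrow> 'a \<Rightarrow> 'a set"
  where "Gp0 st p0 = {x \<in> Gpi st. lsupp st x \<in> Lp0 st p0 \<and> rsupp st x \<in> Lp0 st p0}"

definition Mp :: "'a::times \<Rightarrow> 'a set"
  where "Mp p0 = {m * p0 | m. True}"

definition P0 :: "('a::times \<Rightarrow> 'a) \<Rightarrow> 'a \<Rightarrow> 'a set"
  where "P0 st p0 = Gp0 st p0 \<inter> Mp p0"

definition P0u :: "('a::times \<Rightarrow> 'a) \<Rightarrow> 'a \<Rightarrow> 'a set"
  where "P0u st p0 = {\<eta> \<in> P0 st p0. st \<eta> * \<eta> = p0}"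

definition inv_corner :: "'a::times \<Rightarrow> 'a \<Rightarrow> bool"
  where "inv_corner p0 g \<longleftrightarrow> p0 * g * p0 = g \<and> (\<exists>h. p0 * h * p0 = h \<and> g * h = p0 \<and> h * g = p0)"

text \<open>Smoothness (C^\<infinity>) of f on S, an open subset of the closed subspace V:
  there are iterated derivatives D k x (v_1,...,v_k) (directions taken from V, stored in
  the first k entries of a sequence), each Fr\'echet differentiable in x along S with the
  next derivative as derivative, and jointly continuous.\<close>

definition vcons :: "'a \<Rightarrow> (nat \<Rightarrow> 'a) \<Rightarrow> nat \<Rightarrow> 'a"
  where "vcons v vs = (\<lambda>i. case i of 0 \<Rightarrow> v | Suc j \<Rightarrow> vs j)"

definition smooth_on :: "'a::real_normed_vector set \<Rightarrow> 'a set \<Rightarrow> ('a \<Rightarrow> 'b::real_normed_vector) \<Rightarrow> bool"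
  where "smooth_on S V f \<longleftrightarrow>
    (\<exists>D :: nat \<Rightarrow> 'a \<Rightarrow> (nat \<Rightarrow> 'a) \<Rightarrow> 'b.
       (\<forall>x vs. D 0 x vs = f x) \<and>
       (\<forall>k. \<forall>x\<in>S. \<forall>vs. (\<forall>i. vs i \<in> V) \<longrightarrow>
            ((\<lambda>y. D k y vs) has_derivative (\<lambda>v. D (Suc k) x (vcons v vs))) (at x within S)) \<and>
       (\<forall>k. continuous_on (S \<times> {vs. \<forall>i. vs i \<in> V}) (\<lambda>(x, vs). D k x vs)))"

text \<open>Partial derivatives in the complex coordinates (\<eta>, \<eta>*): with L the real
  Fr\'echet derivative, L v = \<langle>dF/d\<eta>, v\<rangle> + \<langle>dF/d\<eta>*, v*\<rangle>,
  the first complex-linear in v, the second complex-linear in v*.\<close>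

definition dfr :: "('a::real_normed_vector \<Rightarrow> 'b::real_normed_vector) \<Rightarrow> 'a set \<Rightarrow> 'a \<Rightarrow> 'a \<Rightarrow> 'b"
  where "dfr f S x v = frechet_derivative f (at x within S) v"

definition deta :: "(complex \<Rightarrow> 'a::real_normed_vector \<Rightarrow> 'a) \<Rightarrow> ('a \<Rightarrow> 'a) \<Rightarrow> 'a set \<Rightarrow> 'a \<Rightarrow> 'a \<Rightarrow> 'a"
  where "deta sc f S x v = sc (1/2) (dfr f S x v - sc \<i> (dfr f S x (sc \<i> v)))"

definition detas :: "(complex \<Rightarrow> 'a::real_normed_vector \<Rightarrow> 'a) \<Rightarrow> ('a \<Rightarrow> 'a) \<Rightarrow> ('a \<Rightarrow> 'a) \<Rightarrow> 'a set \<Rightarrow> 'a \<Rightarrow> 'a \<Rightarrow> 'a"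
  where "detas sc st f S x w = sc (1/2) (dfr f S x (st w) + sc \<i> (dfr f S x (sc \<i> (st w))))"

definition bracketA :: "(complex \<Rightarrow> 'a::{real_normed_algebra_1,banach} \<Rightarrow> 'a) \<Rightarrow> ('a \<Rightarrow> 'a) \<Rightarrow> 'a
     \<Rightarrow> ('a \<Rightarrow> 'a) \<Rightarrow> ('a \<Rightarrow> 'a) \<Rightarrow> 'a \<Rightarrow> 'a"
  where "bracketA sc st p0 X1 X2 \<eta> =
    (let S = P0 st p0 in
      (X2 \<eta> * X1 \<eta> - X1 \<eta> * X2 \<eta>)
      + deta sc X2 S \<eta> (X1 \<eta> * \<eta>) - deta sc X1 S \<eta> (X2 \<eta> * \<eta>)
      + detas sc st X2 S \<eta> (st \<eta> * st (X1 \<eta>)) - detas sc st X1 S \<eta> (st \<eta> * st (X2 \<eta>)))"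

end

theory Submission imports Defs begin

text \<open>Writing T(\<eta>) = \<eta>*(X + X*)\<eta>, the hypotheses say T vanishes on P0u.  Isometries U
  (U*U = 1) act on P0u from the left, so T also vanishes along every curve
  exp(tK)\<eta> with K skew-adjoint, and differentiating at t = 0 gives an identity for
  the derivative of X in the direction K\<eta>.  Every direction Y\<eta> with
  \<eta>*(Y + Y*)\<eta> = 0 is of this form.  The \<eta>- and \<eta>*-derivatives in the bracket
  recombine into the real derivative, so the bracket is
  B = [X2,X1] + DX2(X1\<eta>) - DX1(X2\<eta>), and \<eta>*(B + B*)\<eta> is exactly the
  difference of the identities for (X2, Y = X1) and (X1, Y = X2).\<close>

lemma Mp_mult_proj:
  fixes \<eta> p0 :: "'a::semigroup_mult"
  assumes "proj st p0" and "\<eta> \<in> Mp p0"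
  shows "\<eta> * p0 = \<eta>"
  using assms unfolding Mp_def proj_def by (auto simp: mult.assoc)

locale cstar_algebra =
  fixes sc :: "complex \<Rightarrow> 'a::{real_normed_algebra_1,banach} \<Rightarrow> 'a" and st :: "'a \<Rightarrow> 'a"
  assumes cstar: "cstar_alg sc st"
begin

lemma sc_one: "sc 1 x = x"
  and sc_add_right: "sc a (x + y) = sc a x + sc a y"
  and sc_add_left: "sc (a + b) x = sc a x + sc b x"
  and sc_of_real: "sc (complex_of_real r) x = r *\<^sub>R x"
  and st_st [simp]: "st (st x) = x"
  and st_add [simp]: "st (x + y) = st x + st y"
  and st_sc: "st (sc a x) = sc (cnj a) (st x)"
  and st_mult [simp]: "st (x * y) = st y * st x"
  and norm_st_mult_self: "norm (st x * x) = (norm x)\<^sup>2"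
  using cstar unfolding cstar_alg_def by auto

lemma norm_le_norm_st: "norm x \<le> norm (st x)"
proof (cases "x = 0")
  case False
  have "(norm x)\<^sup>2 \<le> norm (st x) * norm x"
    using norm_st_mult_self[of x] norm_mult_ineq[of "st x" x] by simp
  with False show ?thesis by (simp add: power2_eq_square)
qed simp

lemma norm_st: "norm (st x) = norm x"
  using norm_le_norm_st[of x] norm_le_norm_st[of "st x"] by simp

lemma st_scaleR [simp]: "st (r *\<^sub>R x) = r *\<^sub>R st x"
  by (metis sc_of_real st_sc complex_cnj_complex_of_real)

lemma additive_st: "Modules.additive st"
  by (simp add: Modules.additive_def)

lemma st_diff [simp]: "st (x - y) = st x - st y"
  using Modules.additive.diff[OF additive_st] .

lemma bounded_linear_st: "bounded_linear st"
  by (rule bounded_linear_intro[where K = 1]) (auto simp: norm_st)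

lemma st_one [simp]: "st 1 = 1"
  by (metis st_st st_mult mult.left_neutral mult.right_neutral)

lemma st_power [simp]: "st (x ^ n) = st x ^ n"
  by (induction n) (simp_all add: power_commutes)

lemma st_exp: "st (exp x) = exp (st x)"
proof -
  have "st (exp x) = (\<Sum>n. st (x ^ n /\<^sub>R fact n))"
    unfolding exp_def using bounded_linear.suminf[OF bounded_linear_st summable_exp_generic]
    by simp
  also have "\<dots> = exp (st x)" unfolding exp_def by simp
  finally show ?thesis .
qed

lemma exp_skew_isometry:
  assumes "st K = - K"
  shows "st (exp K) * exp K = 1"
  using assms by (simp add: st_exp exp_add_commuting[symmetric])

lemma half_sc_sum: "sc (1/2) (a - c) + sc (1/2) (a + c) = a"
proof -
  have "sc (1/2) (a - c) + sc (1/2) (a + c) = sc (1/2) a + sc (1/2) a"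
    by (metis sc_add_right add.left_commute diff_add_cancel)
  also have "\<dots> = sc (1/2 + 1/2) a" by (rule sc_add_left[symmetric])
  also have "\<dots> = a" by (simp add: sc_one)
  finally show ?thesis .
qed

lemma bracketA_eq_dfr:
  "bracketA sc st p0 X1 X2 \<eta> = (X2 \<eta> * X1 \<eta> - X1 \<eta> * X2 \<eta>)
     + dfr X2 (P0 st p0) \<eta> (X1 \<eta> * \<eta>) - dfr X1 (P0 st p0) \<eta> (X2 \<eta> * \<eta>)"
proof -
  have "deta sc Y (P0 st p0) \<eta> (X \<eta> * \<eta>) + detas sc st Y (P0 st p0) \<eta> (st \<eta> * st (X \<eta>))
      = dfr Y (P0 st p0) \<eta> (X \<eta> * \<eta>)" for X Y
    unfolding deta_def detas_def by (simp add: half_sc_sum)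
  from this[of X2 X1] this[of X1 X2] show ?thesis
    unfolding bracketA_def Let_def by (simp add: algebra_simps)
qed

lemma isometry_mult_cancel:
  assumes "st U * U = 1"
  shows "U * x = U * y \<longleftrightarrow> x = y"
  by (metis assms mult.assoc mult.left_neutral)

lemma
  assumes U: "st U * U = 1"
  shows absv_isometry_mult: "absv st (U * x) = absv st x"
    and rsupp_isometry_mult: "rsupp st (U * x) = rsupp st x"
    and partinv_isometry_mult: "partinv st (U * x) = partinv st x"
proof -
  have "st (U * x) * (U * x) = st x * x"
    by (simp add: mult.assoc) (metis U mult.assoc mult.left_neutral)
  then show a: "absv st (U * x) = absv st x" unfolding absv_def by simp
  have "U * x * q = U * x \<longleftrightarrow> x * q = x" for q
    using isometry_mult_cancel[OF U, of "x * q" x] by (simp add: mult.assoc)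
  then show "rsupp st (U * x) = rsupp st x" unfolding rsupp_def by simp
  show "partinv st (U * x) = partinv st x" unfolding partinv_def a ..
qed

lemma rsupp_eq_if_isometry:
  assumes p0: "proj st p0" and e: "st \<eta> * \<eta> = p0" and ep: "\<eta> * p0 = \<eta>"
  shows "rsupp st \<eta> = p0"
  unfolding rsupp_def
proof (rule the_equality)
  show "proj st p0 \<and> \<eta> * p0 = \<eta> \<and> (\<forall>q. proj st q \<and> \<eta> * q = \<eta> \<longrightarrow> p0 * q = p0)"
    using p0 ep e by (metis mult.assoc)
  fix p assume p: "proj st p \<and> \<eta> * p = \<eta> \<and> (\<forall>q. proj st q \<and> \<eta> * q = \<eta> \<longrightarrow> p * q = p)"
  then have "p * p0 = p" using p0 ep by blast
  then have "p = p0 * p" using p p0 st_mult[of p p0] unfolding proj_def by metis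
  also have "\<dots> = p0" using p e by (metis mult.assoc)
  finally show "p = p0" .
qed

lemma P0u_isometry_mult:
  assumes p0: "proj st p0" and U: "st U * U = 1" and \<eta>: "\<eta> \<in> P0u st p0"
  shows "U * \<eta> \<in> P0u st p0"
proof -
  have e: "st \<eta> * \<eta> = p0" and m: "\<eta> \<in> Mp p0" and g: "\<eta> \<in> Gp0 st p0"
    using \<eta> unfolding P0u_def P0_def by auto
  have e': "st (U * \<eta>) * (U * \<eta>) = p0"
    using e U by (simp add: mult.assoc) (metis mult.assoc mult.left_neutral)
  have m': "U * \<eta> \<in> Mp p0" using m unfolding Mp_def by (auto simp: mult.assoc[symmetric])
  have ep: "U * \<eta> * p0 = U * \<eta>" using Mp_mult_proj[OF p0 m'] .
  have gi: "U * \<eta> \<in> Gpi st" using g partinv_isometry_mult[OF U] unfolding Gp0_def Gpi_def by auto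
  have "lsupp st (U * \<eta>) \<in> Lp0 st p0"
    unfolding Lp0_def using gi rsupp_eq_if_isometry[OF p0 e' ep] by blast
  moreover have "rsupp st (U * \<eta>) \<in> Lp0 st p0"
    using g rsupp_isometry_mult[OF U] unfolding Gp0_def by auto
  ultimately show ?thesis using gi e' m' unfolding P0u_def P0_def Gp0_def by auto
qed

lemma skew_extension:
  assumes e: "st \<eta> * \<eta> = p0" and ep: "\<eta> * p0 = \<eta>"
    and t: "st \<eta> * (Y + st Y) * \<eta> = 0"
  obtains K where "st K = - K" and "K * \<eta> = Y * \<eta>"
proof
  let ?P = "\<eta> * st \<eta>"
  define K where "K = Y * ?P - ?P * st Y + ?P * st Y * ?P"
  have "\<eta> * (st \<eta> * (Y + st Y) * \<eta>) * st \<eta> = 0" using t by simp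
  then have z: "?P * Y * ?P + ?P * st Y * ?P = 0" by (simp add: algebra_simps)
  have "st K = ?P * st Y - Y * ?P + ?P * Y * ?P" unfolding K_def by (simp add: mult.assoc)
  also have "\<dots> = - K" unfolding K_def using z by (simp add: algebra_simps eq_neg_iff_add_eq_0)
  finally show "st K = - K" .
  have "?P * \<eta> = \<eta>" using e ep by (simp add: mult.assoc)
  then show "K * \<eta> = Y * \<eta>" unfolding K_def by (simp add: algebra_simps)
qed

lemma exp_orbit_has_derivative:
  "((\<lambda>t. exp (t *\<^sub>R K) * \<eta>) has_derivative (\<lambda>h. h *\<^sub>R (K * \<eta>))) (at 0)"
proof -
  have "((\<lambda>t. exp (t *\<^sub>R K)) has_derivative (\<lambda>h. h *\<^sub>R (exp (0 *\<^sub>R K) * K))) (at 0)"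
    using exp_scaleR_has_vector_derivative_right[of K 0 UNIV]
    unfolding has_vector_derivative_def by simp
  from has_derivative_mult[OF this has_derivative_const[of \<eta>]] show ?thesis
    by (simp add: mult.assoc)
qed

lemma tangency_derivative:
  assumes p0: "proj st p0" and \<eta>: "\<eta> \<in> P0u st p0"
    and X: "(X has_derivative L) (at \<eta> within P0 st p0)"
    and T: "\<forall>\<xi>\<in>P0u st p0. st \<xi> * (X \<xi> + st (X \<xi>)) * \<xi> = 0"
    and K: "st K = - K"
  shows "st (K * \<eta>) * (X \<eta> + st (X \<eta>)) * \<eta> + st \<eta> * (L (K * \<eta>) + st (L (K * \<eta>))) * \<eta>
     + st \<eta> * (X \<eta> + st (X \<eta>)) * (K * \<eta>) = 0"
proof -
  define \<gamma> where "\<gamma> t = exp (t *\<^sub>R K) * \<eta>" for t :: real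
  have \<gamma>_P0u: "\<gamma> t \<in> P0u st p0" for t
    unfolding \<gamma>_def using K by (intro P0u_isometry_mult[OF p0 _ \<eta>] exp_skew_isometry) simp
  have \<gamma>0: "\<gamma> 0 = \<eta>" unfolding \<gamma>_def by simp
  have d\<gamma>: "(\<gamma> has_derivative (\<lambda>h. h *\<^sub>R (K * \<eta>))) (at 0)"
    unfolding \<gamma>_def by (rule exp_orbit_has_derivative)
  have "range \<gamma> \<subseteq> P0 st p0" using \<gamma>_P0u unfolding P0u_def by auto
  then have "(X has_derivative L) (at (\<gamma> 0) within range \<gamma>)"
    using has_derivative_subset[OF X] \<gamma>0 by simp
  from has_derivative_in_compose[OF d\<gamma> this]
  have dX: "((\<lambda>t. X (\<gamma> t)) has_derivative (\<lambda>h. L (h *\<^sub>R (K * \<eta>)))) (at 0)" .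
  have dstX: "((\<lambda>t. st (X (\<gamma> t))) has_derivative (\<lambda>h. st (L (h *\<^sub>R (K * \<eta>))))) (at 0)"
    using bounded_linear.has_derivative[OF bounded_linear_st dX] .
  have dst\<gamma>: "((\<lambda>t. st (\<gamma> t)) has_derivative (\<lambda>h. st (h *\<^sub>R (K * \<eta>)))) (at 0)"
    using bounded_linear.has_derivative[OF bounded_linear_st d\<gamma>] .
  define G where "G t = st (\<gamma> t) * (X (\<gamma> t) + st (X (\<gamma> t))) * \<gamma> t" for t
  have dG: "(G has_derivative (\<lambda>h. st (\<gamma> 0) * (X (\<gamma> 0) + st (X (\<gamma> 0))) * (h *\<^sub>R (K * \<eta>))
      + (st (\<gamma> 0) * (L (h *\<^sub>R (K * \<eta>)) + st (L (h *\<^sub>R (K * \<eta>))))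
      + st (h *\<^sub>R (K * \<eta>)) * (X (\<gamma> 0) + st (X (\<gamma> 0)))) * \<gamma> 0)) (at 0)"
    unfolding G_def by (intro has_derivative_mult has_derivative_add dX dstX d\<gamma> dst\<gamma>)
  have "G = (\<lambda>_. 0)" using \<gamma>_P0u T unfolding G_def by auto
  then have "(G has_derivative (\<lambda>_. 0)) (at 0)" by simp
  from has_derivative_unique[OF dG this]
  have "st (\<gamma> 0) * (X (\<gamma> 0) + st (X (\<gamma> 0))) * (1 *\<^sub>R (K * \<eta>))
      + (st (\<gamma> 0) * (L (1 *\<^sub>R (K * \<eta>)) + st (L (1 *\<^sub>R (K * \<eta>))))
      + st (1 *\<^sub>R (K * \<eta>)) * (X (\<gamma> 0) + st (X (\<gamma> 0)))) * \<gamma> 0 = 0"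
    by meson
  then show ?thesis unfolding \<gamma>0 by (simp add: algebra_simps)
qed

end

lemma has_derivative_dfr_if_smooth:
  fixes X :: "'a::real_normed_algebra_1 \<Rightarrow> 'a"
  assumes "smooth_on S (Mp p0) X" and "\<eta> \<in> S"
  shows "(X has_derivative dfr X S \<eta>) (at \<eta> within S)"
proof -
  obtain D where D0: "\<forall>x vs. D 0 x vs = X x" and
    D1: "\<forall>k. \<forall>x\<in>S. \<forall>vs. (\<forall>i. vs i \<in> Mp p0) \<longrightarrow>
            ((\<lambda>y. D k y vs) has_derivative (\<lambda>v. D (Suc k) x (vcons v vs))) (at x within S)"
    using assms(1) unfolding smooth_on_def by blast
  have "0 \<in> Mp p0" unfolding Mp_def by (auto intro: exI[of _ 0])
  with D1 assms(2) have "((\<lambda>y. D 0 y (\<lambda>_. 0)) has_derivative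
      (\<lambda>v. D 1 \<eta> (vcons v (\<lambda>_. 0)))) (at \<eta> within S)"
    by auto
  then have "X differentiable (at \<eta> within S)"
    using D0 unfolding differentiable_def by auto
  then show ?thesis unfolding dfr_def frechet_derivative_works .
qed

theorem mainTheorem5:
  fixes sc :: "complex \<Rightarrow> 'a::{real_normed_algebra_1,banach} \<Rightarrow> 'a"
    and st :: "'a \<Rightarrow> 'a" and p0 :: 'a and X1 X2 :: "'a \<Rightarrow> 'a"
  assumes W: "wstar_alg sc st"
    and p0: "proj st p0"
    and sm1: "smooth_on (P0 st p0) (Mp p0) X1"
    and sm2: "smooth_on (P0 st p0) (Mp p0) X2"
    and inv1: "\<forall>\<eta>\<in>P0 st p0. \<forall>g. inv_corner p0 g \<longrightarrow> X1 (\<eta> * g) = X1 \<eta>"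
    and inv2: "\<forall>\<eta>\<in>P0 st p0. \<forall>g. inv_corner p0 g \<longrightarrow> X2 (\<eta> * g) = X2 \<eta>"
    and t1: "\<forall>\<eta>\<in>P0u st p0. st \<eta> * (X1 \<eta> + st (X1 \<eta>)) * \<eta> = 0"
    and t2: "\<forall>\<eta>\<in>P0u st p0. st \<eta> * (X2 \<eta> + st (X2 \<eta>)) * \<eta> = 0"
  shows "\<forall>\<eta>\<in>P0u st p0. st \<eta> * (bracketA sc st p0 X1 X2 \<eta> + st (bracketA sc st p0 X1 X2 \<eta>)) * \<eta> = 0"
proof
  interpret cstar_algebra sc st using W unfolding wstar_alg_def by unfold_locales simp
  fix \<eta> assume \<eta>: "\<eta> \<in> P0u st p0"
  then have S: "\<eta> \<in> P0 st p0" and e: "st \<eta> * \<eta> = p0" and "\<eta> \<in> Mp p0"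
    unfolding P0u_def P0_def by auto
  then have ep: "\<eta> * p0 = \<eta>" using Mp_mult_proj[OF p0] by blast
  obtain K1 where K1: "st K1 = - K1" "K1 * \<eta> = X1 \<eta> * \<eta>"
    using skew_extension[OF e ep t1[rule_format, OF \<eta>]] .
  obtain K2 where K2: "st K2 = - K2" "K2 * \<eta> = X2 \<eta> * \<eta>"
    using skew_extension[OF e ep t2[rule_format, OF \<eta>]] .
  define D1 where "D1 = dfr X1 (P0 st p0) \<eta> (X2 \<eta> * \<eta>)"
  define D2 where "D2 = dfr X2 (P0 st p0) \<eta> (X1 \<eta> * \<eta>)"
  have E1: "st (X2 \<eta> * \<eta>) * (X1 \<eta> + st (X1 \<eta>)) * \<eta> + st \<eta> * (D1 + st D1) * \<eta>
      + st \<eta> * (X1 \<eta> + st (X1 \<eta>)) * (X2 \<eta> * \<eta>) = 0"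
    using tangency_derivative[OF p0 \<eta> has_derivative_dfr_if_smooth[OF sm1 S] t1 K2(1)]
    unfolding K2(2) D1_def .
  have E2: "st (X1 \<eta> * \<eta>) * (X2 \<eta> + st (X2 \<eta>)) * \<eta> + st \<eta> * (D2 + st D2) * \<eta>
      + st \<eta> * (X2 \<eta> + st (X2 \<eta>)) * (X1 \<eta> * \<eta>) = 0"
    using tangency_derivative[OF p0 \<eta> has_derivative_dfr_if_smooth[OF sm2 S] t2 K1(1)]
    unfolding K1(2) D2_def .
  have B: "bracketA sc st p0 X1 X2 \<eta> = (X2 \<eta> * X1 \<eta> - X1 \<eta> * X2 \<eta>) + D2 - D1"
    unfolding bracketA_eq_dfr D1_def D2_def ..
  have "st \<eta> * (bracketA sc st p0 X1 X2 \<eta> + st (bracketA sc st p0 X1 X2 \<eta>)) * \<eta>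
    = (st (X1 \<eta> * \<eta>) * (X2 \<eta> + st (X2 \<eta>)) * \<eta> + st \<eta> * (D2 + st D2) * \<eta>
      + st \<eta> * (X2 \<eta> + st (X2 \<eta>)) * (X1 \<eta> * \<eta>))
    - (st (X2 \<eta> * \<eta>) * (X1 \<eta> + st (X1 \<eta>)) * \<eta> + st \<eta> * (D1 + st D1) * \<eta>
      + st \<eta> * (X1 \<eta> + st (X1 \<eta>)) * (X2 \<eta> * \<eta>))"
    unfolding B by (simp add: algebra_simps)
  then show "st \<eta> * (bracketA sc st p0 X1 X2 \<eta> + st (bracketA sc st p0 X1 X2 \<eta>)) * \<eta> = 0"
    using E1 E2 by simp
qed

end
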